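(* Let $m,n\in\mathbb{N}$ and let $p_{j,\ell},q_{j,\ell}\in\mathbb{C}$ with $\Re(p_{j,\ell})>0$, $\Re(q_{j,\ell})>0$ for $1\le j\le n$, $1\le\ell\le m$. Then the $n\times n$ matrix \[ \left(\prod_{\ell=1}^{m}B\left(p_{j,\ell}+\overline{p_{k,\ell}},\ q_{j,\ell}+\overline{q_{k,\ell}}\right)\right)_{j,k=1}^{n} \] is positive semidefinite.
   Context: $B(p,q)=\int_{0}^{1}x^{p-1}(1-x)^{q-1}dx$ for $\Re(p),\Re(q)>0$ is Euler's Beta function. A complex matrix $A=(a_{j,k})$ is positive semidefinite if $\sum_{j,k}a_{j,k}z_j\overline{z_k}\ge0$ for all complex $z_j$. *)

theory Defs
  imports "HOL-Analysis.Analysis"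
begin

definition psd_matrix :: "nat \<Rightarrow> (nat \<Rightarrow> nat \<Rightarrow> complex) \<Rightarrow> bool" where
  "psd_matrix n A \<longleftrightarrow>
     (\<forall>z :: nat \<Rightarrow> complex.
        Im (\<Sum>j=1..n. \<Sum>k=1..n. A j k * z j * cnj (z k)) = 0 \<and>
        Re (\<Sum>j=1..n. \<Sum>k=1..n. A j k * z j * cnj (z k)) \<ge> 0)"

end

theory Submission
  imports Defs "HOL-Complex_Analysis.Complex_Analysis"
begin

text \<open>
  For \<open>Re a, Re b > 0\<close> the Beta function is the integral over \<open>(0,1)\<close> of the kernel
  \<open>t\<^bsup>a-1\<^esup>(1-t)\<^bsup>b-1\<^esup>\<close>, and the kernel at \<open>(p + cnj p', q + cnj q')\<close> factors as
  \<open>f t * cnj (g t)\<close> with \<open>f\<close>, \<open>g\<close> the kernels at \<open>(p + 1/2, q + 1/2)\<close> and \<open>(p' + 1/2, q' + 1/2)\<close>.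
  Hence each factor \<open>B(p\<^sub>j + cnj p\<^sub>k, q\<^sub>j + cnj q\<^sub>k)\<close> is a Gram matrix in \<open>L\<^sup>2(0,1)\<close>, and the
  Hadamard product of a positive semidefinite matrix with such a Gram matrix is again positive
  semidefinite: its quadratic form is the integral of the pointwise nonnegative form of the first
  factor.

  The Beta integral is known for real arguments; it extends to the complex half planes by
  analytic continuation in one variable at a time, the integral being holomorphic as a locally
  uniform limit of integrals over compact subintervals.
\<close>

lemma has_integral_reflect_unit_interval:
  fixes f :: "real \<Rightarrow> 'a::banach"
  assumes "(f has_integral I) {0<..<1}"
  shows "((\<lambda>t. f (1 - t)) has_integral I) {0<..<1}"
proof -
  have "(f has_integral I) {0..1}" using assms by (simp add: has_integral_Icc_iff_Ioo)
  then have "((\<lambda>x. f (x + 1)) has_integral I) {-1..0}"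
    using has_integral_shift_real_ivl[of f I 0 1 1] by simp
  then have "((\<lambda>x. f (- x + 1)) has_integral I) {-0..-(-1)}"
    by (subst has_integral_reflect_real) simp
  then have "((\<lambda>x. f (1 - x)) has_integral I) {0..1}" by simp
  then show ?thesis by (simp add: has_integral_Icc_iff_Ioo)
qed

lemma integral_reflect_unit_interval:
  fixes f :: "real \<Rightarrow> 'a::banach"
  shows "integral {0<..<1} (\<lambda>t. f (1 - t)) = integral {0<..<1} f"
proof -
  have "((\<lambda>t. f (1 - t)) has_integral I) {0<..<1} \<longleftrightarrow> (f has_integral I) {0<..<1}" for I
    using has_integral_reflect_unit_interval[of f I]
      has_integral_reflect_unit_interval[of "\<lambda>t. f (1 - t)" I] by auto
  then show ?thesis unfolding integral_def integrable_on_def by simp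
qed

lemma integrable_on_restrict_subinterval:
  fixes f :: "real \<Rightarrow> 'a::banach"
  assumes "f integrable_on S" "{c..d} \<subseteq> S"
  shows "(\<lambda>t. if t \<in> {c..d} then f t else 0) integrable_on S"
  by (subst integrable_restrict_Int) (use assms integrable_on_subinterval in \<open>auto simp: Int_absorb2\<close>)

lemma norm_integral_Ioo_diff_subinterval_le:
  fixes f :: "real \<Rightarrow> 'a::banach"
  assumes f: "f integrable_on {0<..<1}" and h: "h integrable_on {0<..<1}"
    and bound: "\<And>t. t \<in> {0<..<1} \<Longrightarrow> norm (f t) \<le> h t"
    and c: "0 < c" and d: "d < 1"
  shows "norm (integral {0<..<1} f - integral {c..d} f)
           \<le> integral {0<..<1} (\<lambda>t. if t \<in> {c..d} then 0 else h t)"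
proof -
  have sub: "{c..d} \<subseteq> {0<..<1}" using c d by auto
  then have eq: "{c..d} \<inter> {0<..<1} = {c..d}" by blast
  note restrict_integrable = integrable_on_restrict_subinterval[OF _ sub]
  have "integral {c..d} f = integral {0<..<1} (\<lambda>t. if t \<in> {c..d} then f t else 0)"
    by (simp only: integral_restrict_Int eq)
  then have "integral {0<..<1} f - integral {c..d} f =
          integral {0<..<1} (\<lambda>t. f t - (if t \<in> {c..d} then f t else 0))"
    using f restrict_integrable[OF f] by (simp only: integral_diff)
  also have "norm \<dots> \<le> integral {0<..<1} (\<lambda>t. h t - (if t \<in> {c..d} then h t else 0))"
    using f h restrict_integrable[OF f] restrict_integrable[OF h] bound
    by (intro integral_norm_bound_integral integrable_diff) auto
  finally show ?thesis by (simp add: if_distrib cong: if_cong)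
qed

lemma tendsto_integral_Ioo_outside_shrinking_interval:
  fixes h :: "real \<Rightarrow> real"
  assumes h: "h integrable_on {0<..<1}" and h_nonneg: "\<And>t. 0 \<le> h t"
    and c: "\<And>n. 0 < c n" "c \<longlonglongrightarrow> 0"
  shows "(\<lambda>n. integral {0<..<1} (\<lambda>t. if t \<in> {c n..1 - c n} then 0 else h t)) \<longlonglongrightarrow> 0"
proof -
  define K where "K = (\<lambda>n t. if t \<in> {c n..1 - c n} then 0 else h t)"
  have K_integrable: "K n integrable_on {0<..<1}" for n
  proof -
    have "(\<lambda>t. if t \<in> {c n..1 - c n} then h t else 0) integrable_on {0<..<1}"
      using c(1)[of n] by (intro integrable_on_restrict_subinterval h) auto
    from integrable_diff[OF h this] show ?thesis
      unfolding K_def by (simp add: if_distrib cong: if_cong)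
  qed
  have "(\<lambda>n. integral {0<..<1} (K n)) \<longlonglongrightarrow> integral {0<..<1} (\<lambda>t::real. 0::real)"
  proof (rule Equivalence_Lebesgue_Henstock_Integration.dominated_convergence(2)[where f = K and h = h])
    show "(\<lambda>n. K n t) \<longlonglongrightarrow> 0" if "t \<in> {0<..<1}" for t
    proof (rule tendsto_eventually)
      have "eventually (\<lambda>n. c n < min t (1 - t)) sequentially"
        using that by (intro order_tendstoD(2)[OF c(2)]) auto
      then show "eventually (\<lambda>n. K n t = 0) sequentially"
        by eventually_elim (auto simp: K_def)
    qed
  qed (use K_integrable h h_nonneg in \<open>auto simp: K_def\<close>)
  then show ?thesis by (simp add: K_def)
qed

lemma has_integral_Beta_real_Ioo:
  fixes a b :: real
  assumes "0 < a" "0 < b"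
  shows "((\<lambda>t. t powr (a - 1) * (1 - t) powr (b - 1)) has_integral Beta a b) {0<..<1}"
  using has_integral_Beta_real[OF assms] by (simp add: has_integral_Icc_iff_Ioo)

lemma one_islimpt_of_real_pos: "(1::complex) islimpt complex_of_real ` {0<..}"
  unfolding islimpt_approachable
proof (intro allI impI)
  fix e :: real assume e: "0 < e"
  define y where "y = complex_of_real (1 + e / 2)"
  have "dist y 1 = dist (1 + e / 2) (1::real)"
    unfolding y_def by (metis dist_of_real of_real_1)
  then have "dist y 1 < e"
    using e by (simp add: dist_real_def)
  moreover have "y \<in> of_real ` {0<..}"
    unfolding y_def using e by (intro imageI) simp
  moreover have "y \<noteq> 1"
    unfolding y_def using e by simp
  ultimately show "\<exists>y\<in>complex_of_real ` {0<..}. y \<noteq> 1 \<and> dist y 1 < e"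
    by blast
qed

lemma holomorphic_on_right_half_plane_eqI:
  assumes f: "f holomorphic_on {z. 0 < Re z}" and g: "g holomorphic_on {z. 0 < Re z}"
    and eq: "\<And>x. 0 < x \<Longrightarrow> f (of_real x) = g (of_real x)" and z: "0 < Re z"
  shows "f z = g z"
proof -
  have "(\<lambda>z. f z - g z) z = 0"
  proof (rule analytic_continuation[where S = "{z. 0 < Re z}" and U = "complex_of_real ` {0<..}" and \<xi> = 1
      and f = "\<lambda>z. f z - g z"])
    show "(\<lambda>z. f z - g z) holomorphic_on {z. 0 < Re z}"
      using f g by (rule holomorphic_on_diff)
    show "open {z. 0 < Re z}" by (simp add: open_halfspace_Re_gt)
    show "connected {z. 0 < Re z}" by (rule convex_connected[OF convex_halfspace_Re_gt])
  qed (use eq z one_islimpt_of_real_pos in auto)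
  then show ?thesis by simp
qed

lemma holomorphic_on_Beta_right_half_planes:
  assumes "\<And>z. z \<in> A \<Longrightarrow> 0 < Re (f z)" "\<And>z. z \<in> A \<Longrightarrow> 0 < Re (g z)"
    and "f holomorphic_on A" "g holomorphic_on A"
  shows "(\<lambda>z. Beta (f z) (g z)) holomorphic_on A"
proof -
  have "w \<notin> \<int>\<^sub>\<le>\<^sub>0" if "0 < Re w" for w
    using that by (auto elim!: nonpos_Ints_cases)
  with assms show ?thesis by (intro holomorphic_Beta) auto
qed

definition beta_kernel :: "complex \<Rightarrow> complex \<Rightarrow> real \<Rightarrow> complex" where
  "beta_kernel a b t = exp ((a - 1) * of_real (ln t) + (b - 1) * of_real (ln (1 - t)))"

lemma beta_kernel_add_cnj:
  "beta_kernel (p + cnj p') (q + cnj q') t =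
     beta_kernel (p + 1/2) (q + 1/2) t * cnj (beta_kernel (p' + 1/2) (q' + 1/2) t)"
  unfolding beta_kernel_def exp_cnj exp_add [symmetric] by (simp add: algebra_simps)

lemma norm_beta_kernel:
  assumes "0 < t" "t < 1"
  shows "norm (beta_kernel a b t) = t powr (Re a - 1) * (1 - t) powr (Re b - 1)"
  using assms unfolding beta_kernel_def norm_exp_eq_Re by (simp add: powr_def exp_add mult.commute)

lemma beta_kernel_of_real:
  assumes "0 < t" "t < 1"
  shows "beta_kernel (of_real a) (of_real b) t = of_real (t powr (a - 1) * (1 - t) powr (b - 1))"
proof -
  have "beta_kernel (of_real a) (of_real b) t = of_real (exp ((a - 1) * ln t + (b - 1) * ln (1 - t)))"
    unfolding beta_kernel_def exp_of_real [symmetric] by simp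
  with assms show ?thesis by (simp add: powr_def exp_add mult.commute)
qed

lemma beta_kernel_reflect: "beta_kernel a b (1 - t) = beta_kernel b a t"
  unfolding beta_kernel_def by (simp add: add.commute)

lemma continuous_on_beta_kernel:
  assumes "S \<subseteq> {0<..<1}"
  shows "continuous_on S (beta_kernel a b)"
  unfolding beta_kernel_def using assms by (intro continuous_intros) auto

lemma absolutely_integrable_beta_kernel:
  assumes "0 < Re a" "0 < Re b"
  shows "beta_kernel a b absolutely_integrable_on {0<..<1}"
proof (rule measurable_bounded_by_integrable_imp_absolutely_integrable)
  show "beta_kernel a b \<in> borel_measurable (lebesgue_on {0<..<1})"
    by (intro continuous_imp_measurable_on_sets_lebesgue continuous_on_beta_kernel) auto
  show "(\<lambda>t. t powr (Re a - 1) * (1 - t) powr (Re b - 1)) integrable_on {0<..<1}"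
    using has_integral_Beta_real_Ioo[OF assms] by blast
qed (auto simp: norm_beta_kernel)

lemma integrable_beta_kernel:
  assumes "0 < Re a" "0 < Re b"
  shows "beta_kernel a b integrable_on {0<..<1}"
  using absolutely_integrable_beta_kernel[OF assms] absolutely_integrable_on_def by blast

lemma integral_beta_kernel_commute:
  "integral {0<..<1} (beta_kernel a b) = integral {0<..<1} (beta_kernel b a)"
  using integral_reflect_unit_interval[of "beta_kernel a b"] by (simp add: beta_kernel_reflect)

lemma integral_beta_kernel_of_real:
  fixes a b :: real
  assumes "0 < a" "0 < b"
  shows "integral {0<..<1} (beta_kernel (of_real a) (of_real b)) = Beta (of_real a) (of_real b)"
proof -
  have "((\<lambda>t. of_real (t powr (a - 1) * (1 - t) powr (b - 1))) has_integral
          complex_of_real (Beta a b)) {0<..<1}"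
    by (rule has_integral_of_real[OF has_integral_Beta_real_Ioo[OF assms]])
  then have "(beta_kernel (of_real a) (of_real b) has_integral of_real (Beta a b)) {0<..<1}"
    by (rule has_integral_cong[THEN iffD1, rotated]) (auto simp: beta_kernel_of_real)
  then show ?thesis by (simp add: integral_unique Beta_complex_of_real)
qed

lemma holomorphic_on_integral_beta_kernel_subinterval:
  assumes "0 < c" "d < 1"
  shows "(\<lambda>a. integral {c..d} (beta_kernel a b)) holomorphic_on UNIV"
proof -
  have "(\<lambda>a. integral (cbox c d) (beta_kernel a b)) holomorphic_on UNIV"
  proof (rule leibniz_rule_holomorphic[where fx = "\<lambda>a t. of_real (ln t) * beta_kernel a b t"])
    show "((\<lambda>a. beta_kernel a b t) has_field_derivative of_real (ln t) * beta_kernel a b t) (at a within UNIV)"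
      for a t unfolding beta_kernel_def by (auto intro!: derivative_eq_intros simp: mult_ac)
    show "beta_kernel a b integrable_on cbox c d" for a
      using assms by (auto intro!: integrable_continuous_interval continuous_on_beta_kernel)
    show "continuous_on (UNIV \<times> cbox c d) (\<lambda>(a, t). of_real (ln t) * beta_kernel a b t)"
      unfolding beta_kernel_def case_prod_unfold using assms by (intro continuous_intros) auto
  qed auto
  then show ?thesis by simp
qed

lemma holomorphic_on_integral_beta_kernel:
  assumes b: "0 < Re b"
  shows "(\<lambda>a. integral {0<..<1} (beta_kernel a b)) holomorphic_on {a. 0 < Re a}"
proof (rule holomorphic_uniform_sequence)
  define c :: "nat \<Rightarrow> real" where "c = (\<lambda>n. inverse (real (Suc n)))"
  have c: "0 < c n" "c \<longlonglongrightarrow> 0" for n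
    unfolding c_def by (simp, rule LIMSEQ_inverse_real_of_nat)
  define F where "F n a = integral {c n..1 - c n} (beta_kernel a b)" for n a
  show "open {a. 0 < Re a}" by (simp add: open_halfspace_Re_gt)
  show "F n holomorphic_on {a. 0 < Re a}" for n
    unfolding F_def using c(1)[of n]
    by (auto intro: holomorphic_on_subset[OF holomorphic_on_integral_beta_kernel_subinterval])
  fix x assume "x \<in> {a. 0 < Re a}"
  text \<open>On \<open>cball x r\<close> we have \<open>Re a \<ge> r\<close>, so the real Beta kernel with exponents
    \<open>r, Re b\<close> dominates all kernels there; its tails give a uniform bound.\<close>
  define r where "r = Re x / 2"
  have r: "0 < r" using \<open>x \<in> _\<close> by (simp add: r_def)
  have Re_ge: "r \<le> Re a" if "a \<in> cball x r" for a
    using that complex_Re_le_cmod[of "x - a"] by (simp add: r_def dist_norm)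
  define H where "H = (\<lambda>t. t powr (r - 1) * (1 - t) powr (Re b - 1))"
  have H: "H integrable_on {0<..<1}" "0 \<le> H t" for t
    using has_integral_Beta_real_Ioo[OF r b] by (auto simp: H_def)
  have bound: "norm (beta_kernel a b t) \<le> H t" if "a \<in> cball x r" "t \<in> {0<..<1}" for a t
    using that Re_ge[OF that(1)] unfolding H_def
    by (subst norm_beta_kernel) (auto intro!: mult_right_mono powr_mono')
  have dist_le: "dist (F n a) (integral {0<..<1} (beta_kernel a b))
                   \<le> integral {0<..<1} (\<lambda>t. if t \<in> {c n..1 - c n} then 0 else H t)"
    if "a \<in> cball x r" for n a
    unfolding F_def dist_norm norm_minus_commute[of "integral {c n.._} _"]
    using Re_ge[OF that] r b c(1)[of n] bound[OF that]
    by (intro norm_integral_Ioo_diff_subinterval_le integrable_beta_kernel H(1)) auto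
  have "uniform_limit (cball x r) F (\<lambda>a. integral {0<..<1} (beta_kernel a b)) sequentially"
  proof (rule uniform_limitI)
    fix \<epsilon> :: real assume "0 < \<epsilon>"
    with tendsto_integral_Ioo_outside_shrinking_interval[OF H c]
    have "eventually (\<lambda>n. integral {0<..<1} (\<lambda>t. if t \<in> {c n..1 - c n} then 0 else H t) < \<epsilon>) sequentially"
      by (rule order_tendstoD(2))
    then show "\<forall>\<^sub>F n in sequentially. \<forall>a\<in>cball x r. dist (F n a) (integral {0<..<1} (beta_kernel a b)) < \<epsilon>"
      by eventually_elim (use dist_le order.strict_trans1 in blast)
  qed
  moreover have "cball x r \<subseteq> {a. 0 < Re a}" using Re_ge r by force
  ultimately show "\<exists>r>0. cball x r \<subseteq> {a. 0 < Re a} \<and>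
      uniform_limit (cball x r) F (\<lambda>a. integral {0<..<1} (beta_kernel a b)) sequentially"
    using r by blast
qed

lemma integral_beta_kernel_eq_Beta:
  assumes a: "0 < Re a" and b: "0 < Re b"
  shows "integral {0<..<1} (beta_kernel a b) = Beta a b"
proof -
  have real_second: "integral {0<..<1} (beta_kernel a (of_real y)) = Beta a (of_real y)"
    if a: "0 < Re a" and y: "0 < y" for a y
  proof (rule holomorphic_on_right_half_plane_eqI[OF _ _ _ a])
    show "(\<lambda>a. integral {0<..<1} (beta_kernel a (of_real y))) holomorphic_on {a. 0 < Re a}"
      using y by (intro holomorphic_on_integral_beta_kernel) simp
    show "(\<lambda>a. Beta a (of_real y)) holomorphic_on {a. 0 < Re a}"
      using y by (intro holomorphic_on_Beta_right_half_planes holomorphic_intros) auto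
    show "integral {0<..<1} (beta_kernel (of_real x) (of_real y)) = Beta (of_real x) (of_real y)"
      if "0 < x" for x
      using that y by (rule integral_beta_kernel_of_real)
  qed
  show ?thesis
  proof (rule holomorphic_on_right_half_plane_eqI[OF _ _ _ b])
    have "(\<lambda>b. integral {0<..<1} (beta_kernel b a)) holomorphic_on {b. 0 < Re b}"
      using a by (rule holomorphic_on_integral_beta_kernel)
    then show "(\<lambda>b. integral {0<..<1} (beta_kernel a b)) holomorphic_on {b. 0 < Re b}"
      by (simp add: integral_beta_kernel_commute)
    show "(\<lambda>b. Beta a b) holomorphic_on {b. 0 < Re b}"
      using a by (intro holomorphic_on_Beta_right_half_planes holomorphic_intros) auto
    show "integral {0<..<1} (beta_kernel a (of_real y)) = Beta a (of_real y)" if "0 < y" for y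
      using a that by (rule real_second)
  qed
qed

lemma has_integral_Beta_complex:
  assumes "0 < Re a" "0 < Re b"
  shows "(beta_kernel a b has_integral Beta a b) {0<..<1}"
  using integrable_integral[OF integrable_beta_kernel[OF assms]]
  by (simp add: integral_beta_kernel_eq_Beta[OF assms])

lemma psd_matrix_const_one: "psd_matrix n (\<lambda>j k. 1)"
  unfolding psd_matrix_def
proof
  fix z :: "nat \<Rightarrow> complex"
  have "(\<Sum>j=1..n. \<Sum>k=1..n. 1 * z j * cnj (z k)) = (\<Sum>j=1..n. z j) * cnj (\<Sum>k=1..n. z k)"
    by (simp add: sum_distrib_left sum_distrib_right) (rule sum.swap)
  also have "\<dots> = of_real (norm (\<Sum>j=1..n. z j) ^ 2)"
    by (metis complex_norm_square)
  finally show "Im (\<Sum>j=1..n. \<Sum>k=1..n. 1 * z j * cnj (z k)) = 0 \<and>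
      0 \<le> Re (\<Sum>j=1..n. \<Sum>k=1..n. 1 * z j * cnj (z k))"
    by simp
qed

lemma psd_matrix_mult_gram_integral:
  assumes psd: "psd_matrix n A"
    and gram: "\<And>j k. j \<in> {1..n} \<Longrightarrow> k \<in> {1..n} \<Longrightarrow>
                 ((\<lambda>t. g j t * cnj (g k t)) has_integral B j k) S"
  shows "psd_matrix n (\<lambda>j k. A j k * B j k)"
  unfolding psd_matrix_def
proof
  fix z :: "nat \<Rightarrow> complex"
  define Q where "Q t = (\<Sum>j=1..n. \<Sum>k=1..n. A j k * (z j * g j t) * cnj (z k * g k t))" for t
  define I where "I = (\<Sum>j=1..n. \<Sum>k=1..n. A j k * B j k * z j * cnj (z k))"
  have "((\<lambda>t. \<Sum>j=1..n. \<Sum>k=1..n. (A j k * z j * cnj (z k)) * (g j t * cnj (g k t))) has_integral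
        (\<Sum>j=1..n. \<Sum>k=1..n. (A j k * z j * cnj (z k)) * B j k)) S"
    by (intro has_integral_sum finite_atLeastAtMost has_integral_mult_right gram) auto
  then have Q_integral: "(Q has_integral I) S"
    unfolding Q_def I_def by (simp add: algebra_simps)
  have Q_nonneg: "Im (Q t) = 0 \<and> 0 \<le> Re (Q t)" for t
    using psd unfolding psd_matrix_def Q_def by (erule_tac x = "\<lambda>j. z j * g j t" in allE) auto
  have "((\<lambda>t. Im (Q t)) has_integral Im I) S"
    using has_integral_linear[OF Q_integral bounded_linear_Im] by (simp add: o_def)
  then have "Im I = 0"
    using Q_nonneg has_integral_0 has_integral_unique by fastforce
  moreover have "((\<lambda>t. Re (Q t)) has_integral Re I) S"
    using has_integral_linear[OF Q_integral bounded_linear_Re] by (simp add: o_def)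
  then have "0 \<le> Re I"
    by (rule has_integral_nonneg) (use Q_nonneg in blast)
  ultimately show "Im (\<Sum>j=1..n. \<Sum>k=1..n. A j k * B j k * z j * cnj (z k)) = 0 \<and>
      0 \<le> Re (\<Sum>j=1..n. \<Sum>k=1..n. A j k * B j k * z j * cnj (z k))"
    unfolding I_def by simp
qed

theorem mainTheorem6:
  fixes m n :: nat and p q :: "nat \<Rightarrow> nat \<Rightarrow> complex"
  assumes "\<And>j l. 1 \<le> j \<Longrightarrow> j \<le> n \<Longrightarrow> 1 \<le> l \<Longrightarrow> l \<le> m \<Longrightarrow> Re (p j l) > 0"
      and "\<And>j l. 1 \<le> j \<Longrightarrow> j \<le> n \<Longrightarrow> 1 \<le> l \<Longrightarrow> l \<le> m \<Longrightarrow> Re (q j l) > 0"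
  shows "psd_matrix n (\<lambda>j k. \<Prod>l=1..m. Beta (p j l + cnj (p k l)) (q j l + cnj (q k l)))"
proof -
  have "psd_matrix n (\<lambda>j k. \<Prod>l=1..r. Beta (p j l + cnj (p k l)) (q j l + cnj (q k l)))"
    if "r \<le> m" for r
    using that
  proof (induction r)
    case 0
    show ?case by (simp add: psd_matrix_const_one)
  next
    case (Suc r)
    let ?g = "\<lambda>j. beta_kernel (p j (Suc r) + 1/2) (q j (Suc r) + 1/2)"
    have "psd_matrix n (\<lambda>j k. (\<Prod>l=1..r. Beta (p j l + cnj (p k l)) (q j l + cnj (q k l))) *
            Beta (p j (Suc r) + cnj (p k (Suc r))) (q j (Suc r) + cnj (q k (Suc r))))"
    proof (rule psd_matrix_mult_gram_integral[where g = ?g and S = "{0<..<1}"])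
      fix j k assume "j \<in> {1..n}" "k \<in> {1..n}"
      with assms Suc.prems show "((\<lambda>t. ?g j t * cnj (?g k t)) has_integral
          Beta (p j (Suc r) + cnj (p k (Suc r))) (q j (Suc r) + cnj (q k (Suc r)))) {0<..<1}"
        unfolding beta_kernel_add_cnj [symmetric]
        by (intro has_integral_Beta_complex) (auto intro!: add_pos_pos)
    qed (use Suc in simp)
    then show ?case by (simp add: prod.nat_ivl_Suc')
  qed
  then show ?thesis by blast
qed

end
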